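(* Suppose $H$ satisfies (B1) and (B2), and for $\alpha>0$ let $v^\alpha\in C(\mathbb{T}^d)\otimes\mathcal{B}(I)$ be the viscosity solution of (DP) (the one constructed by Perron's method, which satisfies $-M/\alpha\le v^\alpha\le M/\alpha$ with $M:=\sup_{\mathbb{T}^d\times I}|H(x,0,\xi)|$). Then for each $\alpha>0$ there exists $L_\alpha>0$ such that $|v^\alpha(x,\xi)-v^\alpha(y,\xi)|\le L_\alpha|x-y|$ for all $x,y\in\mathbb{T}^d$, $\xi\in I$.
   Context: $I\subset\mathbb{R}$ finite interval, $|I|=1$; $k$ Borel measurable on $I\times I$ with $0<k_0\le k\le k_1$. $H\in C(\mathbb{T}^d\times\mathbb{R}^d)\otimes\mathcal{B}(I)$ with $H(\cdot,p,\cdot)$ bounded for each $p$. (DP): $\alpha v(x,\xi)+H(x,Dv(x,\xi),\xi)+\int_I k(\xi,\eta)(v(x,\xi)-v(x,\eta))d\eta=0$ in $\mathbb{T}^d\times I$, understood in the viscosity sense (test functions $\phi\in C^1(\mathbb{T}^d)$ touching $v(\cdot,\xi)$ for fixed $\xi$). (B1): $C_1|p|^m-C_2\le H(x,p,\xi)$ for constants $C_1,C_2>0$, $m>1$. (B2): for each $R>0$ a modulus $\omega_R$ with $|H(x,p,\xi)-H(y,p,\xi)|\le\omega_R(|x-y|)$ for $|p|\le R$. $C(\mathbb{T}^d)\otimes\mathcal{B}(I)$: functions continuous in $x$ for each $\xi$ and Borel in $\xi$ for each $x$. *)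

theory Defs
  imports "HOL-Analysis.Analysis"
begin

text \<open>Functions on the torus T^d = R^d / Z^d are represented as Z^d-periodic
  functions on R^d (type real^'n, with d = CARD('n)).\<close>

definition Zd_periodic :: "(real^'n \<Rightarrow> 'b) \<Rightarrow> bool" where
  "Zd_periodic f \<longleftrightarrow> (\<forall>x z. (\<forall>i. z $ i \<in> \<int>) \<longrightarrow> f (x + z) = f x)"

definition C1_torus :: "(real^'n \<Rightarrow> real) \<Rightarrow> (real^'n \<Rightarrow> real^'n) \<Rightarrow> bool" where
  "C1_torus phi Dphi \<longleftrightarrow> Zd_periodic phi
     \<and> (\<forall>x. (phi has_derivative (\<lambda>h. Dphi x \<bullet> h)) (at x))
     \<and> continuous_on UNIV Dphi"

definition C_tensor_B :: "real set \<Rightarrow> (real^'n \<Rightarrow> real \<Rightarrow> real) \<Rightarrow> bool" where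
  "C_tensor_B I v \<longleftrightarrow>
     (\<forall>\<xi>\<in>I. continuous_on UNIV (\<lambda>x. v x \<xi>) \<and> Zd_periodic (\<lambda>x. v x \<xi>))
     \<and> (\<forall>x. set_borel_measurable borel I (\<lambda>\<xi>. v x \<xi>))"

definition coupling :: "real set \<Rightarrow> (real \<Rightarrow> real \<Rightarrow> real) \<Rightarrow> (real^'n \<Rightarrow> real \<Rightarrow> real)
    \<Rightarrow> real^'n \<Rightarrow> real \<Rightarrow> real" where
  "coupling I k v x \<xi> = (LINT \<eta>:I|lborel. k \<xi> \<eta> * (v x \<xi> - v x \<eta>))"

definition visc_subsol ::
  "real \<Rightarrow> (real^'n \<Rightarrow> real^'n \<Rightarrow> real \<Rightarrow> real) \<Rightarrow> real set \<Rightarrow> (real \<Rightarrow> real \<Rightarrow> real)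
    \<Rightarrow> (real^'n \<Rightarrow> real \<Rightarrow> real) \<Rightarrow> bool" where
  "visc_subsol \<alpha> H I k v \<longleftrightarrow>
     (\<forall>\<xi>\<in>I. \<forall>phi Dphi x0. C1_torus phi Dphi
        \<and> (\<exists>e>0. \<forall>x\<in>ball x0 e. v x \<xi> - phi x \<le> v x0 \<xi> - phi x0)
        \<longrightarrow> \<alpha> * v x0 \<xi> + H x0 (Dphi x0) \<xi> + coupling I k v x0 \<xi> \<le> 0)"

definition visc_supersol ::
  "real \<Rightarrow> (real^'n \<Rightarrow> real^'n \<Rightarrow> real \<Rightarrow> real) \<Rightarrow> real set \<Rightarrow> (real \<Rightarrow> real \<Rightarrow> real)
    \<Rightarrow> (real^'n \<Rightarrow> real \<Rightarrow> real) \<Rightarrow> bool" where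
  "visc_supersol \<alpha> H I k v \<longleftrightarrow>
     (\<forall>\<xi>\<in>I. \<forall>phi Dphi x0. C1_torus phi Dphi
        \<and> (\<exists>e>0. \<forall>x\<in>ball x0 e. v x \<xi> - phi x \<ge> v x0 \<xi> - phi x0)
        \<longrightarrow> \<alpha> * v x0 \<xi> + H x0 (Dphi x0) \<xi> + coupling I k v x0 \<xi> \<ge> 0)"

definition visc_sol where
  "visc_sol \<alpha> H I k v \<longleftrightarrow> visc_subsol \<alpha> H I k v \<and> visc_supersol \<alpha> H I k v"

end

theory Submission
  imports Defs
begin

text \<open>Freeze the variable \<xi>: every viscosity subsolution touching \<open>v(\<cdot>,\<xi>)\<close> from above has
  \<open>\<alpha> v + H(x, D\<phi>, \<xi>) + coupling \<le> 0\<close>, and since \<open>v\<close> and the coupling term are bounded, the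
  coercivity (B1) bounds \<open>|D\<phi>|\<close> by a constant \<open>R\<close>. A bounded periodic function all of whose
  test gradients at maximum points are bounded by \<open>R\<close> is Lipschitz: compare \<open>w\<close> with the cone
  \<open>w(y) + K|x - y|\<close>, smoothed and made periodic as \<open>K sqrt(\<Sum>\<^sub>i sin\<^sup>2(\<pi>(x\<^sub>i - y\<^sub>i)) + \<epsilon>\<^sup>2)\<close>.
  For \<open>K\<close> large the maximum of \<open>w\<close> minus the cone cannot be attained far from the vertex,
  because there the gradient of the cone is too large; letting \<open>\<epsilon> \<rightarrow> 0\<close> gives
  \<open>w(x) - w(y) \<le> \<pi> K |x - y|\<close>.\<close>

definition sin_sqdist :: "real^'n \<Rightarrow> real^'n \<Rightarrow> real" where
  "sin_sqdist y x = (\<Sum>i\<in>UNIV. (sin (pi * (x$i - y$i)))\<^sup>2)"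

definition sin_sqdist_grad :: "real^'n \<Rightarrow> real^'n \<Rightarrow> real^'n" where
  "sin_sqdist_grad y x = (\<chi> i. 2 * pi * sin (pi * (x$i - y$i)) * cos (pi * (x$i - y$i)))"

definition smooth_cone :: "real \<Rightarrow> real^'n \<Rightarrow> real^'n \<Rightarrow> real" where
  "smooth_cone e y x = sqrt (sin_sqdist y x + e\<^sup>2)"

lemma has_derivative_sin_sqdist:
  "(sin_sqdist y has_derivative (\<lambda>h. sin_sqdist_grad y x \<bullet> h)) (at x)"
proof -
  have "((\<lambda>x. \<Sum>i\<in>UNIV. (sin (pi * (x$i - y$i)))\<^sup>2) has_derivative
     (\<lambda>h. \<Sum>i\<in>UNIV. 2 * pi * sin (pi * (x$i - y$i)) * cos (pi * (x$i - y$i)) * h$i)) (at x)"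
    by (rule derivative_eq_intros bounded_linear.has_derivative[OF bounded_linear_vec_nth]
        has_derivative_ident)+ (auto simp: algebra_simps)
  then show ?thesis
    unfolding sin_sqdist_def[abs_def] sin_sqdist_grad_def inner_vec_def by (simp add: mult.commute)
qed

lemma continuous_on_sin_sqdist: "continuous_on S (sin_sqdist y)"
  unfolding sin_sqdist_def by (intro continuous_intros)

lemma sin_sqdist_nonneg: "0 \<le> sin_sqdist y x"
  unfolding sin_sqdist_def by (auto intro: sum_nonneg)

lemma sin_sqdist_self [simp]: "sin_sqdist y y = 0"
  unfolding sin_sqdist_def by simp

lemma sin_sq_pi_add_Ints: "(z::real) \<in> \<int> \<Longrightarrow> (sin (pi * (a + z)))\<^sup>2 = (sin (pi * a))\<^sup>2"
proof -
  assume "z \<in> \<int>"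
  then obtain n where n: "z = of_int n" by (auto elim: Ints_cases)
  have s: "sin (of_int n * pi) = 0" using sin_zero_iff_int2 by blast
  have c: "(cos (of_int n * pi))\<^sup>2 = 1" using sin_cos_squared_add[of "of_int n * pi"] s by simp
  have "sin (pi * (a + z)) = sin (pi * a) * cos (of_int n * pi)"
    by (simp add: n distrib_left sin_add s mult.commute)
  then show ?thesis by (simp add: power_mult_distrib c)
qed

lemma Zd_periodic_compose: "Zd_periodic f \<Longrightarrow> Zd_periodic (\<lambda>x. g (f x))"
  unfolding Zd_periodic_def by simp

lemma Zd_periodic_compose2:
  "Zd_periodic f \<Longrightarrow> Zd_periodic g \<Longrightarrow> Zd_periodic (\<lambda>x. h (f x) (g x))"
  unfolding Zd_periodic_def by simp

lemma Zd_periodic_sin_sqdist: "Zd_periodic (sin_sqdist (y :: real^'n))"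
  unfolding Zd_periodic_def sin_sqdist_def
proof (intro allI impI sum.cong refl)
  fix x z :: "real^'n" and i
  assume "\<forall>i. z $ i \<in> \<int>"
  moreover have "(x + z)$i - y$i = (x$i - y$i) + z$i" by simp
  ultimately show "(sin (pi * ((x + z)$i - y$i)))\<^sup>2 = (sin (pi * (x$i - y$i)))\<^sup>2"
    using sin_sq_pi_add_Ints by presburger
qed

lemma sin_sq_le_sin_sqdist: "(sin (pi * (x$i - y$i)))\<^sup>2 \<le> sin_sqdist y x"
  unfolding sin_sqdist_def by (rule member_le_sum) auto

lemma norm_sq_vec: "(norm (x::real^'n))\<^sup>2 = (\<Sum>i\<in>UNIV. (x$i)\<^sup>2)"
  unfolding power2_norm_eq_inner inner_vec_def by (simp add: power2_eq_square)

lemma sin_sqdist_le_dist: "sin_sqdist y x \<le> pi\<^sup>2 * (dist x y)\<^sup>2"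
proof -
  have "sin_sqdist y x \<le> (\<Sum>i\<in>UNIV. (pi * (x$i - y$i))\<^sup>2)"
    unfolding sin_sqdist_def
    by (intro sum_mono abs_le_square_iff[THEN iffD1] abs_sin_x_le_abs_x)
  also have "\<dots> = pi\<^sup>2 * (dist x y)\<^sup>2"
    by (simp add: dist_norm norm_sq_vec sum_distrib_left power_mult_distrib)
  finally show ?thesis .
qed

text \<open>Taylor's bound \<open>|sin s - s| \<le> |s|\<^sup>3/6\<close> with \<open>|s| \<le> 2\<close> gives \<open>|sin s| \<ge> |s|/3\<close>.\<close>
lemma abs_le_abs_sin_pi:
  fixes t :: real
  assumes "\<bar>t\<bar> \<le> 1/2"
  shows "\<bar>t\<bar> \<le> \<bar>sin (pi * t)\<bar>"
proof -
  define s where "s = pi * t"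
  have s2: "\<bar>s\<bar> \<le> 2"
  proof -
    have "pi * \<bar>t\<bar> \<le> 4 * (1/2)"
      using assms pi_less_4 by (intro mult_mono) auto
    then show ?thesis by (simp add: s_def abs_mult)
  qed
  have taylor: "(\<Sum>m<3. sin_coeff m * s ^ m) = s"
    by (simp add: sin_coeff_Suc cos_coeff_def eval_nat_numeral)
  have fact3: "inverse (fact 3) = (1/6 :: real)"
    by (simp add: eval_nat_numeral)
  have "\<bar>sin s - s\<bar> \<le> \<bar>s\<bar> ^ 3 / 6"
    using Maclaurin_sin_bound[of s 3] unfolding taylor fact3 by simp
  also have "\<dots> \<le> 4 * \<bar>s\<bar> / 6"
  proof -
    have "\<bar>s\<bar> ^ 3 = \<bar>s\<bar>\<^sup>2 * \<bar>s\<bar>" by (simp add: power3_eq_cube power2_eq_square)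
    also have "\<dots> \<le> 2\<^sup>2 * \<bar>s\<bar>" using s2 by (intro mult_right_mono power_mono) auto
    finally show ?thesis by simp
  qed
  finally have "\<bar>s\<bar> / 3 \<le> \<bar>sin s\<bar>" by linarith
  moreover have "3 * \<bar>t\<bar> \<le> \<bar>s\<bar>"
    using pi_gt3 by (simp add: s_def abs_mult mult_right_mono)
  ultimately show ?thesis by (simp add: s_def)
qed

lemma dist_sq_le_sin_sqdist:
  assumes "\<And>i. \<bar>x$i - y$i\<bar> \<le> 1/2"
  shows "(dist x y)\<^sup>2 \<le> sin_sqdist y x"
  unfolding dist_norm norm_sq_vec sin_sqdist_def
  by (intro sum_mono abs_le_square_iff[THEN iffD1])
    (simp add: abs_le_abs_sin_pi[OF assms])

lemma sin_sqdist_le_norm_grad: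
  assumes "sin_sqdist y x \<le> 1/4"
  shows "4 * sin_sqdist y x \<le> (norm (sin_sqdist_grad y x))\<^sup>2"
proof -
  have "4 * sin_sqdist y x = (\<Sum>i\<in>UNIV. 4 * (sin (pi * (x$i - y$i)))\<^sup>2)"
    unfolding sin_sqdist_def by (simp add: sum_distrib_left)
  also have "\<dots> \<le> (\<Sum>i\<in>UNIV. (2 * pi * sin (pi * (x$i - y$i)) * cos (pi * (x$i - y$i)))\<^sup>2)"
  proof (rule sum_mono)
    fix i
    define s where "s = sin (pi * (x$i - y$i))"
    define c where "c = cos (pi * (x$i - y$i))"
    have "s\<^sup>2 \<le> 1/4" using sin_sq_le_sin_sqdist[of x i y] assms unfolding s_def by linarith
    moreover have "s\<^sup>2 + c\<^sup>2 = 1" unfolding s_def c_def by simp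
    ultimately have "3/4 \<le> c\<^sup>2" by linarith
    moreover have "2\<^sup>2 \<le> pi\<^sup>2" using pi_gt3 by (intro power_mono) auto
    ultimately have "2\<^sup>2 * (3/4) \<le> pi\<^sup>2 * c\<^sup>2" by (intro mult_mono) auto
    then have "1 * s\<^sup>2 \<le> (pi\<^sup>2 * c\<^sup>2) * s\<^sup>2" by (intro mult_right_mono) auto
    then show "4 * s\<^sup>2 \<le> (2 * pi * s * c)\<^sup>2" by (simp add: power_mult_distrib algebra_simps)
  qed
  also have "\<dots> = (norm (sin_sqdist_grad y x))\<^sup>2"
    unfolding norm_sq_vec sin_sqdist_grad_def by simp
  finally show ?thesis .
qed

lemma continuous_on_smooth_cone: "continuous_on S (smooth_cone e y)"
  unfolding smooth_cone_def by (intro continuous_intros continuous_on_sin_sqdist)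

lemma smooth_cone_pos: "0 < e \<Longrightarrow> 0 < smooth_cone e y x"
  unfolding smooth_cone_def using sin_sqdist_nonneg[of y x] by (simp add: add_nonneg_pos)

lemma smooth_cone_self: "0 < e \<Longrightarrow> smooth_cone e y y = e"
  unfolding smooth_cone_def by simp

lemma smooth_cone_sq: "(smooth_cone e y x)\<^sup>2 = sin_sqdist y x + e\<^sup>2"
  unfolding smooth_cone_def using sin_sqdist_nonneg[of y x] by simp

lemma Zd_periodic_smooth_cone: "Zd_periodic (smooth_cone e y)"
  unfolding smooth_cone_def[abs_def] by (rule Zd_periodic_compose[OF Zd_periodic_sin_sqdist])

lemma smooth_cone_le: "0 < e \<Longrightarrow> smooth_cone e y x \<le> pi * dist x y + e"
proof -
  assume e: "0 < e"
  have "smooth_cone e y x \<le> sqrt (sin_sqdist y x) + sqrt (e\<^sup>2)"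
    unfolding smooth_cone_def by (rule sqrt_add_le_add_sqrt) (auto simp: sin_sqdist_nonneg)
  also have "sqrt (sin_sqdist y x) \<le> sqrt (pi\<^sup>2 * (dist x y)\<^sup>2)"
    by (rule real_sqrt_le_mono[OF sin_sqdist_le_dist])
  also have "\<dots> = pi * dist x y" by (simp add: real_sqrt_mult)
  finally show ?thesis using e by simp
qed

lemma C1_torus_smooth_cone:
  assumes e: "0 < e"
  shows "C1_torus (\<lambda>x. K * smooth_cone e y x)
           (\<lambda>x. (K / (2 * smooth_cone e y x)) *\<^sub>R sin_sqdist_grad y x)"
  unfolding C1_torus_def
proof (intro conjI allI)
  show "Zd_periodic (\<lambda>x. K * smooth_cone e y x)"
    by (rule Zd_periodic_compose[OF Zd_periodic_smooth_cone])
next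
  fix x
  have pos: "0 < sin_sqdist y x + e\<^sup>2" using sin_sqdist_nonneg[of y x] e by (simp add: add_nonneg_pos)
  have "((\<lambda>x. K * sqrt (sin_sqdist y x + e\<^sup>2)) has_derivative
        (\<lambda>h. K * (inverse (sqrt (sin_sqdist y x + e\<^sup>2)) / 2 * (sin_sqdist_grad y x \<bullet> h)))) (at x)"
    by (rule derivative_eq_intros has_derivative_sin_sqdist refl pos)+ (simp add: mult.commute)
  then show "((\<lambda>x. K * smooth_cone e y x) has_derivative
      (\<lambda>h. ((K / (2 * smooth_cone e y x)) *\<^sub>R sin_sqdist_grad y x) \<bullet> h)) (at x)"
    unfolding smooth_cone_def by (simp add: field_simps)
next
  have "smooth_cone e y x \<noteq> 0" for x
    using smooth_cone_pos[OF e, of y x] by simp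
  then show "continuous_on UNIV (\<lambda>x. (K / (2 * smooth_cone e y x)) *\<^sub>R sin_sqdist_grad y x)"
    unfolding sin_sqdist_grad_def
    by (intro continuous_intros continuous_on_sin_sqdist continuous_on_smooth_cone) simp_all
qed

lemma Zd_periodic_attains_max:
  fixes f :: "real^'n \<Rightarrow> real"
  assumes cont: "continuous_on UNIV f" and per: "Zd_periodic f"
  obtains x0 where "\<And>i. \<bar>x0$i - y$i\<bar> \<le> 1/2" and "\<And>x. f x \<le> f x0"
proof -
  define c :: "real^'n" where "c = (\<chi> i. 1/2)"
  define S where "S = cbox (y - c) (y + c)"
  have coord: "(y - c)$i \<le> x$i \<and> x$i \<le> (y + c)$i \<longleftrightarrow> \<bar>x$i - y$i\<bar> \<le> 1/2" for x i
    unfolding c_def abs_le_iff by auto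
  have inS: "x \<in> S \<longleftrightarrow> (\<forall>i. \<bar>x$i - y$i\<bar> \<le> 1/2)" for x
    unfolding S_def mem_box_cart coord ..
  have "y \<in> S" unfolding inS by simp
  moreover have "compact S" unfolding S_def by (rule compact_cbox)
  ultimately obtain x0 where x0: "x0 \<in> S" "\<And>x. x \<in> S \<Longrightarrow> f x \<le> f x0"
    using continuous_attains_sup[of S f] continuous_on_subset[OF cont subset_UNIV] by blast
  have "f x \<le> f x0" for x
  proof -
    define z :: "real^'n" where "z = (\<chi> i. of_int \<lfloor>y$i - x$i + 1/2\<rfloor>)"
    have "\<bar>(x + z)$i - y$i\<bar> \<le> 1/2" for i
      using of_int_floor_le[of "y$i - x$i + 1/2"] real_of_int_floor_add_one_gt[of "y$i - x$i + 1/2"]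
      unfolding z_def abs_le_iff vector_add_component vec_lambda_beta by linarith
    then have "f (x + z) \<le> f x0" using x0(2) inS by blast
    moreover have "f (x + z) = f x"
      using per unfolding Zd_periodic_def z_def by simp
    ultimately show ?thesis by simp
  qed
  then show ?thesis using that x0(1) inS by blast
qed

definition visc_grad_bounded :: "real \<Rightarrow> (real^'n \<Rightarrow> real) \<Rightarrow> bool" where
  "visc_grad_bounded R w \<longleftrightarrow>
     (\<forall>phi Dphi x0. C1_torus phi Dphi \<longrightarrow> (\<forall>x. w x - phi x \<le> w x0 - phi x0)
        \<longrightarrow> norm (Dphi x0) \<le> R)"

lemma sin_sqdist_le_at_cone_max:
  assumes e: "0 < e" and R: "0 < R" and K: "2 * R \<le> K"
    and small: "sin_sqdist y x0 \<le> 1/4"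
    and grad: "norm ((K / (2 * smooth_cone e y x0)) *\<^sub>R sin_sqdist_grad y x0) \<le> R"
  shows "sin_sqdist y x0 \<le> e\<^sup>2"
proof -
  define g where "g = smooth_cone e y x0"
  define p where "p = sin_sqdist y x0"
  have "0 < g" unfolding g_def by (rule smooth_cone_pos[OF e])
  then have g_sq_pos: "0 < g\<^sup>2" by simp
  have g_sq: "g\<^sup>2 = p + e\<^sup>2" unfolding g_def p_def by (rule smooth_cone_sq)
  have "K\<^sup>2 * p / g\<^sup>2 = (K / (2 * g))\<^sup>2 * (4 * p)"
    by (simp add: power_divide power_mult_distrib)
  also have "\<dots> \<le> (K / (2 * g))\<^sup>2 * (norm (sin_sqdist_grad y x0))\<^sup>2"
    using sin_sqdist_le_norm_grad[OF small] unfolding p_def by (intro mult_left_mono) auto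
  also have "\<dots> = (norm ((K / (2 * g)) *\<^sub>R sin_sqdist_grad y x0))\<^sup>2"
    by (simp only: norm_scaleR power_mult_distrib power2_abs)
  also have "\<dots> \<le> R\<^sup>2"
    using grad unfolding g_def by (intro power_mono) auto
  finally have "K\<^sup>2 * p \<le> R\<^sup>2 * g\<^sup>2"
    by (simp only: pos_divide_le_eq[OF g_sq_pos])
  moreover have "(2 * R)\<^sup>2 * p \<le> K\<^sup>2 * p"
    using K R sin_sqdist_nonneg[of y x0] unfolding p_def by (intro mult_right_mono power_mono) auto
  ultimately have "R\<^sup>2 * (3 * p) \<le> R\<^sup>2 * e\<^sup>2"
    unfolding g_sq by (simp add: power_mult_distrib algebra_simps)
  then have "3 * p \<le> e\<^sup>2" using R by simp
  then show ?thesis using sin_sqdist_nonneg[of y x0] unfolding p_def by linarith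
qed

text \<open>The slope \<open>K\<close> is chosen so that the cone beats the oscillation \<open>2B\<close> of \<open>w\<close> before
  \<open>sin_sqdist\<close> reaches \<open>1/4\<close>, the range in which its gradient controls it.\<close>
lemma cone_max_near_vertex:
  fixes w :: "real^'n \<Rightarrow> real"
  assumes cont: "continuous_on UNIV w" and per: "Zd_periodic w" and bnd: "\<And>x. \<bar>w x\<bar> \<le> B"
    and R: "0 < R" and grad: "visc_grad_bounded R w"
    and K: "K = 2 * R + 8 * B + 1" and e: "0 < e" "e \<le> 1/4"
  obtains x0 where "dist x0 y \<le> e" and "\<And>x. w x - K * smooth_cone e y x \<le> w x0"
proof -
  have B0: "0 \<le> B" using bnd[of y] by linarith
  have Kpos: "0 < K" using K R B0 by linarith
  have "continuous_on UNIV (\<lambda>x. w x - K * smooth_cone e y x)"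
    by (intro continuous_intros cont continuous_on_smooth_cone)
  moreover have "Zd_periodic (\<lambda>x. w x - K * smooth_cone e y x)"
    by (rule Zd_periodic_compose2[OF per Zd_periodic_smooth_cone])
  ultimately obtain x0 where cube: "\<And>i. \<bar>x0$i - y$i\<bar> \<le> 1/2"
    and mx: "\<And>x. w x - K * smooth_cone e y x \<le> w x0 - K * smooth_cone e y x0"
    by (rule Zd_periodic_attains_max[where y = y]) auto
  define g where "g = smooth_cone e y x0"
  have gpos: "0 < g" unfolding g_def by (rule smooth_cone_pos[OF e(1)])
  have "w y - K * e \<le> w x0 - K * g" using mx[of y] unfolding g_def smooth_cone_self[OF e(1)] .
  then have "K * g \<le> 2 * B + K * e" using bnd[of y] bnd[of x0] by (simp add: abs_le_iff)
  moreover have "2 * B \<le> K / 4" using K R by simp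
  ultimately have "K * g \<le> K * (1/4 + e)" by (simp add: algebra_simps)
  then have "g \<le> 1/2" using Kpos e by simp
  then have "g\<^sup>2 \<le> (1/2)\<^sup>2" using gpos by (intro power_mono) auto
  then have "sin_sqdist y x0 + e\<^sup>2 \<le> 1/4"
    using smooth_cone_sq[of e y x0] unfolding g_def by (simp add: power_divide)
  then have "sin_sqdist y x0 \<le> 1/4"
    using zero_le_power2[of e] by linarith
  moreover have "norm ((K / (2 * g)) *\<^sub>R sin_sqdist_grad y x0) \<le> R"
    using grad C1_torus_smooth_cone[OF e(1)] mx unfolding visc_grad_bounded_def g_def by blast
  moreover have "2 * R \<le> K" using K B0 by simp
  ultimately have "sin_sqdist y x0 \<le> e\<^sup>2"
    using sin_sqdist_le_at_cone_max[OF e(1) R] unfolding g_def by blast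
  with dist_sq_le_sin_sqdist[OF cube] have "dist x0 y \<le> e"
    using e(1) by (meson dual_order.trans power2_le_imp_le less_imp_le)
  moreover have "w x - K * smooth_cone e y x \<le> w x0" for x
    using mx[of x] mult_pos_pos[OF Kpos gpos] unfolding g_def by linarith
  ultimately show ?thesis using that by blast
qed

lemma lipschitz_if_visc_grad_bounded:
  fixes w :: "real^'n \<Rightarrow> real"
  assumes cont: "continuous_on UNIV w" and per: "Zd_periodic w" and bnd: "\<And>x. \<bar>w x\<bar> \<le> B"
    and R: "0 < R" and grad: "visc_grad_bounded R w"
  shows "w x - w y \<le> (2 * R + 8 * B + 1) * pi * dist x y"
proof -
  define K where "K = 2 * R + 8 * B + 1"
  have Kpos: "0 < K" using K_def R bnd[of y] by linarith
  have w_cont_y: "\<forall>\<eta>>0. \<exists>\<delta>>0. \<forall>x'. dist x' y < \<delta> \<longrightarrow> dist (w x') (w y) < \<eta>"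
    using cont unfolding continuous_on_iff by simp
  have approx: "w x - w y \<le> K * pi * dist x y + (K + 1) * \<eta>" if "0 < \<eta>" for \<eta>
  proof -
    obtain \<delta> where "0 < \<delta>" and \<delta>: "\<And>x'. dist x' y < \<delta> \<Longrightarrow> dist (w x') (w y) < \<eta>"
      using w_cont_y \<open>0 < \<eta>\<close> by blast
    define e where "e = min (1/4) (min \<eta> (\<delta>/2))"
    have e: "0 < e" "e \<le> 1/4" "e \<le> \<eta>" "e < \<delta>"
      unfolding e_def using \<open>0 < \<eta>\<close> \<open>0 < \<delta>\<close> by auto
    obtain x0 where "dist x0 y \<le> e" and mx: "w x - K * smooth_cone e y x \<le> w x0"
      using cone_max_near_vertex[where y = y, OF cont per bnd R grad K_def e(1,2)] by blast
    then have "dist (w x0) (w y) < \<eta>" using \<delta> e(4) by simp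
    then have "w x0 - w y < \<eta>" by (simp add: dist_real_def)
    moreover have "K * smooth_cone e y x \<le> K * (pi * dist x y + \<eta>)"
      using smooth_cone_le[OF e(1), of y x] e(3) Kpos by (intro mult_left_mono) auto
    ultimately show ?thesis using mx by (simp add: algebra_simps)
  qed
  show ?thesis
    unfolding K_def[symmetric]
  proof (rule field_le_epsilon)
    fix \<epsilon> :: real
    assume "0 < \<epsilon>"
    then have "w x - w y \<le> K * pi * dist x y + (K + 1) * (\<epsilon> / (K + 1))"
      using Kpos by (intro approx) simp
    then show "w x - w y \<le> K * pi * dist x y + \<epsilon>" using Kpos by simp
  qed
qed

lemma abs_coupling_le:
  fixes v :: "real^'n \<Rightarrow> real \<Rightarrow> real"
  assumes I: "I \<in> sets lborel" "emeasure lborel I < \<infinity>"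
    and kb: "\<And>\<eta>. \<eta> \<in> I \<Longrightarrow> \<bar>k \<xi> \<eta>\<bar> \<le> k1" and vb: "\<And>\<eta>. \<eta> \<in> I \<Longrightarrow> \<bar>v x \<eta>\<bar> \<le> B"
    and xi: "\<xi> \<in> I"
  shows "\<bar>coupling I k v x \<xi>\<bar> \<le> 2 * k1 * B * measure lborel I"
proof -
  define f where "f \<eta> = indicator I \<eta> *\<^sub>R (k \<xi> \<eta> * (v x \<xi> - v x \<eta>))" for \<eta>
  define g where "g \<eta> = indicator I \<eta> * (2 * k1 * B)" for \<eta>
  have "0 \<le> 2 * k1 * B" using kb[OF xi] vb[OF xi] by simp
  then have g0: "0 \<le> g \<eta>" for \<eta> unfolding g_def by simp
  have gint: "integrable lborel g"
    unfolding g_def using integrable_real_indicator[OF I] by (rule integrable_mult_left)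
  have fg: "\<bar>f \<eta>\<bar> \<le> g \<eta>" for \<eta>
  proof (cases "\<eta> \<in> I")
    case True
    have "\<bar>v x \<xi> - v x \<eta>\<bar> \<le> 2 * B" using vb[OF xi] vb[OF True] by linarith
    then have "\<bar>k \<xi> \<eta>\<bar> * \<bar>v x \<xi> - v x \<eta>\<bar> \<le> k1 * (2 * B)"
      using kb[OF True] by (intro mult_mono) auto
    then show ?thesis using True unfolding f_def g_def by (simp add: abs_mult)
  qed (simp add: f_def g_def)
  have "\<bar>integral\<^sup>L lborel f\<bar> \<le> integral\<^sup>L lborel g"
  proof (cases "integrable lborel f")
    case True
    then show ?thesis using integral_abs_bound_integral[OF True gint] fg by blast
  qed (simp add: not_integrable_integral_eq g0)
  also have "integral\<^sup>L lborel g = 2 * k1 * B * measure lborel I"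
    unfolding g_def by (simp add: mult.commute)
  finally show ?thesis unfolding coupling_def set_lebesgue_integral_def f_def .
qed

lemma norm_le_max_one_if_powr_le:
  assumes "norm p powr m \<le> Q" and "1 < m"
  shows "norm p \<le> max 1 Q"
proof (cases "norm p \<le> 1")
  case False
  then have "norm p powr 1 \<le> norm p powr m" using assms(2) by (intro powr_mono) auto
  then show ?thesis using assms(1) False by simp
qed simp

lemma visc_grad_bounded_if_subsol:
  fixes v :: "real^'n \<Rightarrow> real \<Rightarrow> real"
  assumes sub: "visc_subsol \<alpha> H I k v" and xi: "\<xi> \<in> I" and alpha: "0 < \<alpha>"
    and vb: "\<And>x. \<bar>v x \<xi>\<bar> \<le> B" and cb: "\<And>x. \<bar>coupling I k v x \<xi>\<bar> \<le> Ck"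
    and coercive: "\<And>x p. C1 * norm p powr m - C2 \<le> H x p \<xi>" and "0 < C1" "1 < m"
  shows "visc_grad_bounded (max 1 ((\<alpha> * B + Ck + C2) / C1)) (\<lambda>x. v x \<xi>)"
  unfolding visc_grad_bounded_def
proof (intro allI impI)
  fix phi Dphi x0
  assume "C1_torus phi Dphi" and "\<forall>x. v x \<xi> - phi x \<le> v x0 \<xi> - phi x0"
  moreover from this(2) have "\<exists>e>0. \<forall>x\<in>ball x0 e. v x \<xi> - phi x \<le> v x0 \<xi> - phi x0"
    by (intro exI[of _ 1]) simp
  ultimately have "\<alpha> * v x0 \<xi> + H x0 (Dphi x0) \<xi> + coupling I k v x0 \<xi> \<le> 0"
    using sub xi unfolding visc_subsol_def by blast
  moreover have "- (\<alpha> * B) \<le> \<alpha> * v x0 \<xi>"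
    using mult_left_mono[of "- B" "v x0 \<xi>" \<alpha>] vb[of x0] alpha by (simp add: abs_le_iff)
  ultimately have "C1 * norm (Dphi x0) powr m \<le> \<alpha> * B + Ck + C2"
    using coercive[where x=x0 and p="Dphi x0"] cb[of x0] by (simp add: abs_le_iff)
  then have "norm (Dphi x0) powr m \<le> (\<alpha> * B + Ck + C2) / C1"
    using \<open>0 < C1\<close> by (simp add: pos_le_divide_eq mult.commute)
  then show "norm (Dphi x0) \<le> max 1 ((\<alpha> * B + Ck + C2) / C1)"
    using \<open>1 < m\<close> by (rule norm_le_max_one_if_powr_le)
qed

theorem mainTheorem5:
  fixes H :: "real^'n \<Rightarrow> real^'n \<Rightarrow> real \<Rightarrow> real"
    and I :: "real set" and k :: "real \<Rightarrow> real \<Rightarrow> real"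
    and k0 k1 C1 C2 m \<alpha> :: real
    and v :: "real^'n \<Rightarrow> real \<Rightarrow> real"
  assumes I_int: "is_interval I" "bounded I" "measure lborel I = 1"
    and k_meas: "set_borel_measurable borel (I \<times> I) (\<lambda>(\<xi>, \<eta>). k \<xi> \<eta>)"
    and k_bounds: "0 < k0" "\<And>\<xi> \<eta>. \<xi> \<in> I \<Longrightarrow> \<eta> \<in> I \<Longrightarrow> k0 \<le> k \<xi> \<eta> \<and> k \<xi> \<eta> \<le> k1"
    and H_cont: "\<And>\<xi>. \<xi> \<in> I \<Longrightarrow> continuous_on UNIV (\<lambda>(x, p). H x p \<xi>)"
    and H_per: "\<And>\<xi> p. \<xi> \<in> I \<Longrightarrow> Zd_periodic (\<lambda>x. H x p \<xi>)"
    and H_meas: "\<And>x p. set_borel_measurable borel I (H x p)"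
    and H_bdd: "\<And>p. bounded ((\<lambda>(x, \<xi>). H x p \<xi>) ` (UNIV \<times> I))"
    and B1: "0 < C1" "0 < C2" "1 < m"
      "\<And>x p \<xi>. \<xi> \<in> I \<Longrightarrow> C1 * norm p powr m - C2 \<le> H x p \<xi>"
    and B2: "\<And>R. 0 < R \<Longrightarrow> \<exists>\<omega>::real \<Rightarrow> real. (\<omega> \<longlongrightarrow> 0) (at_right 0) \<and>
              (\<forall>x y p \<xi>. \<xi> \<in> I \<and> norm p \<le> R \<longrightarrow> \<bar>H x p \<xi> - H y p \<xi>\<bar> \<le> \<omega> (dist x y))"
    and alpha_pos: "0 < \<alpha>"
    and v_class: "C_tensor_B I v"
    and v_sol: "visc_sol \<alpha> H I k v"
    and v_bound: "\<And>x \<xi>. \<xi> \<in> I \<Longrightarrow>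
        \<bar>v x \<xi>\<bar> \<le> (SUP z\<in>UNIV \<times> I. \<bar>H (fst z) 0 (snd z)\<bar>) / \<alpha>"
  shows "\<exists>L>0. \<forall>x y. \<forall>\<xi>\<in>I. \<bar>v x \<xi> - v y \<xi>\<bar> \<le> L * dist x y"
proof -
  define B where "B = (SUP z\<in>UNIV \<times> I. \<bar>H (fst z) 0 (snd z)\<bar>) / \<alpha>"
  define R where "R = max 1 ((\<alpha> * B + 2 * k1 * B + C2) / C1)"
  have I_sets: "I \<in> sets lborel"
    using I_int(3) measure_notin_sets[of I lborel] by fastforce
  have I_fin: "emeasure lborel I < \<infinity>"
    using I_int(3) measure_zero_top[of lborel I] top.not_eq_extremum by fastforce
  have lip: "v x \<xi> - v y \<xi> \<le> (2 * R + 8 * B + 1) * pi * dist x y" if \<xi>: "\<xi> \<in> I" for x y \<xi>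
  proof -
    have vb: "\<bar>v x \<xi>\<bar> \<le> B" if "\<xi> \<in> I" for x \<xi>
      unfolding B_def using that by (rule v_bound)
    have kb: "\<bar>k \<xi> \<eta>\<bar> \<le> k1" if "\<eta> \<in> I" for \<eta>
      using k_bounds(1) k_bounds(2)[OF \<xi> that] by (simp add: abs_le_iff)
    have cb: "\<bar>coupling I k v x \<xi>\<bar> \<le> 2 * k1 * B" for x
      using abs_coupling_le[where k = k and \<xi> = \<xi> and v = v and x = x and B = B,
          OF I_sets I_fin kb vb \<xi>] I_int(3) by simp
    have "visc_subsol \<alpha> H I k v" using v_sol unfolding visc_sol_def ..
    then have "visc_grad_bounded R (\<lambda>x. v x \<xi>)"
      unfolding R_def using \<xi> alpha_pos vb[OF \<xi>] cb B1(4)[OF \<xi>] B1(1,3)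
      by (rule visc_grad_bounded_if_subsol)
    moreover have "continuous_on UNIV (\<lambda>x. v x \<xi>)" "Zd_periodic (\<lambda>x. v x \<xi>)"
      using v_class \<xi> unfolding C_tensor_B_def by auto
    moreover have "0 < R" unfolding R_def by simp
    ultimately show ?thesis
      using lipschitz_if_visc_grad_bounded vb[OF \<xi>] by blast
  qed
  obtain \<xi>0 where "\<xi>0 \<in> I" using I_int(3) by fastforce
  then have "0 \<le> B" using v_bound[of \<xi>0 0] unfolding B_def by linarith
  then have "0 < (2 * R + 8 * B + 1) * pi" unfolding R_def by simp
  moreover have "\<bar>v x \<xi> - v y \<xi>\<bar> \<le> (2 * R + 8 * B + 1) * pi * dist x y" if "\<xi> \<in> I" for x y \<xi>
    using lip[OF that, of x y] lip[OF that, of y x] by (simp add: dist_commute abs_le_iff)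
  ultimately show ?thesis by blast
qed

end
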